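(* Let $\tau$ be an ergodic invertible measure-preserving map of $[0,1]$ with Lebesgue measure $m$, and let $(\epsilon_n)_{n\ge1}$ be a sequence decreasing to $0$ with $0<\epsilon_n\le1$. Then there is an ergodic invertible measure-preserving map $\omega$ of $[0,1]$ that is isomorphic to $\tau$ (indeed $\omega=\sigma\circ\tau\circ\sigma^{-1}$ for some invertible measure-preserving $\sigma$) such that the intervals $([0,\epsilon_n])_{n\ge1}$ form an a.e. invisible measure-theoretic shrinking target for $\omega$: for a.e. $x\in[0,1]$, $\omega^n(x)\in[0,\epsilon_n]$ for only finitely many $n$. *)

theory Defs
  imports "HOL-Analysis.Analysis"
begin

abbreviation unit_int :: "real measure" where
  "unit_int \<equiv> lebesgue_on {0..1}"

definition mpt :: "(real \<Rightarrow> real) \<Rightarrow> bool" where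
  "mpt T \<longleftrightarrow> T \<in> unit_int \<rightarrow>\<^sub>M unit_int \<and> distr unit_int unit_int T = unit_int"

definition inv_mpt_with :: "(real \<Rightarrow> real) \<Rightarrow> (real \<Rightarrow> real) \<Rightarrow> bool" where
  "inv_mpt_with T S \<longleftrightarrow>
     mpt T \<and>
     mpt S \<and>
     (AE x in unit_int. S (T x) = x) \<and> (AE x in unit_int. T (S x) = x)"

definition inv_mpt :: "(real \<Rightarrow> real) \<Rightarrow> bool" where
  "inv_mpt T \<longleftrightarrow> (\<exists>S. inv_mpt_with T S)"

definition ergodic_map :: "(real \<Rightarrow> real) \<Rightarrow> bool" where
  "ergodic_map T \<longleftrightarrow>
     mpt T \<and>
     (\<forall>A \<in> sets unit_int. T -` A \<inter> space unit_int = A \<longrightarrow>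
        measure unit_int A = 0 \<or> measure unit_int A = 1)"

end

theory Submission
  imports Defs "HOL-Probability.Weak_Convergence"
begin

text \<open>
  Let \<open>S\<close> be the inverse of \<open>\<tau>\<close>. For a set \<open>A\<close> of positive measure, the points whose backward
  orbit \<open>x, S x, \<dots>, S\<^sup>k\<^sup>-\<^sup>1 x\<close> avoids \<open>A\<close> form a decreasing sequence whose intersection is
  \<open>\<tau>\<close>-invariant, hence null by ergodicity; for \<open>A = [0, a]\<close> the measures decrease by at most \<open>a\<close>
  per step. Gluing such sequences over the dyadic scales \<open>2\<^sup>-\<^sup>i\<close> gives decreasing traps \<open>G K\<close>,
  exhausted almost everywhere, with \<open>m (G (2 n)) > \<epsilon> n\<close> and such that \<open>\<tau>\<^sup>n y \<in> G (2 n)\<close>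
  forces \<open>y \<in> G n\<close>. Encoding the exit time from the traps into a real number and taking its
  distribution function yields an automorphism \<open>\<sigma>\<close> of \<open>[0, 1]\<close> with \<open>y \<in> G K\<close> whenever
  \<open>\<sigma> y < m (G K)\<close>. So \<open>\<sigma> (\<tau>\<^sup>n y) \<le> \<epsilon> n\<close> puts \<open>y\<close> in \<open>G n\<close>, which happens for only finitely
  many \<open>n\<close>, and conjugation by \<open>\<sigma>\<close> turns this into invisibility of the targets \<open>[0, \<epsilon> n]\<close>.
\<close>

section \<open>Measure-preserving maps of the unit interval\<close>

lemma space_unit_int [simp]: "space unit_int = {0..1}"
  by (simp add: space_restrict_space)

lemma prob_space_unit_int: "prob_space unit_int"
  by (auto intro!: prob_spaceI simp: emeasure_restrict_space)

interpretation unit: prob_space unit_int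
  by (rule prob_space_unit_int)

lemma measurable_ident_unit_int: "(\<lambda>x. x) \<in> borel_measurable unit_int"
  by (intro measurable_restrict_space1 measurable_completion) simp

lemma mpt_measurable: "mpt T \<Longrightarrow> T \<in> unit_int \<rightarrow>\<^sub>M unit_int"
  by (simp add: mpt_def)

lemma mpt_distr: "mpt T \<Longrightarrow> distr unit_int unit_int T = unit_int"
  by (simp add: mpt_def)

lemma mpt_in_unit_int: "mpt T \<Longrightarrow> x \<in> {0..1} \<Longrightarrow> T x \<in> {0..1}"
  using measurable_space[OF mpt_measurable] by fastforce

lemma mpt_id: "mpt (\<lambda>x. x)"
  unfolding mpt_def by (simp add: distr_id2)

lemma mpt_comp:
  assumes T: "mpt T" and U: "mpt U"
  shows "mpt (\<lambda>x. T (U x))"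
proof -
  have "(\<lambda>x. T (U x)) \<in> unit_int \<rightarrow>\<^sub>M unit_int"
    using measurable_comp[OF mpt_measurable[OF U] mpt_measurable[OF T]] by (simp add: comp_def)
  moreover have
    "distr unit_int unit_int (\<lambda>x. T (U x)) = distr (distr unit_int unit_int U) unit_int T"
    using distr_distr[OF mpt_measurable[OF T] mpt_measurable[OF U]] by (simp add: comp_def)
  ultimately show ?thesis
    using T U by (simp add: mpt_def)
qed

lemma mpt_funpow: "mpt T \<Longrightarrow> mpt (T ^^ n)"
proof (induction n)
  case 0
  then show ?case
    using mpt_id by (simp add: id_def)
next
  case (Suc n)
  then show ?case
    using mpt_comp[of T "T ^^ n"] by (simp add: comp_def)
qed

lemma AE_mpt_comp:
  assumes "mpt T" and "AE y in unit_int. P y"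
  shows "AE x in unit_int. P (T x)"
proof -
  have "AE y in distr unit_int unit_int T. P y"
    by (subst mpt_distr[OF assms(1)]) (rule assms(2))
  then show ?thesis
    by (rule AE_distrD[OF mpt_measurable[OF assms(1)]])
qed

lemma sets_mpt_vimage: "mpt T \<Longrightarrow> A \<in> sets unit_int \<Longrightarrow> T -` A \<inter> {0..1} \<in> sets unit_int"
  using measurable_sets[OF mpt_measurable] by fastforce

lemma measure_mpt_vimage:
  "mpt T \<Longrightarrow> A \<in> sets unit_int \<Longrightarrow> measure unit_int (T -` A \<inter> {0..1}) = measure unit_int A"
  using measure_distr[of T unit_int unit_int A] by (simp add: mpt_def)

lemma (in finite_measure) AE_eq_if_AE_subset_measure_eq:
  assumes A: "A \<in> sets M" and B: "B \<in> sets M"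
    and sub: "AE x in M. x \<in> A \<longrightarrow> x \<in> B" and eq: "measure M A = measure M B"
  shows "AE x in M. x \<in> A \<longleftrightarrow> x \<in> B"
proof -
  have "AE x in M. x \<notin> A - B"
    using sub by eventually_elim auto
  then have "A - B \<in> null_sets M"
    using A B by (simp add: AE_iff_null_sets)
  then have "measure M (B - A) = 0"
    using A B eq finite_measure_Diff'[of A B] finite_measure_Diff'[of B A]
    by (simp add: Int_commute measure_def null_sets_def)
  then have "B - A \<in> null_sets M"
    using A B by (simp add: emeasure_eq_measure null_sets_def)
  show ?thesis
    using AE_not_in[OF \<open>A - B \<in> null_sets M\<close>] AE_not_in[OF \<open>B - A \<in> null_sets M\<close>]
    by eventually_elim auto
qed

lemma AE_mpt_comp_iff:
  assumes T: "mpt T" and P: "Measurable.pred unit_int P"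
  shows "(AE x in unit_int. P (T x)) \<longleftrightarrow> (AE y in unit_int. P y)"
proof -
  have "(AE y in distr unit_int unit_int T. P y) \<longleftrightarrow> (AE x in unit_int. P (T x))"
    using P by (intro AE_distr_iff[OF mpt_measurable[OF T]]) (simp add: pred_def)
  then show ?thesis
    by (subst (asm) mpt_distr[OF T]) simp
qed

lemma AE_right_inverse_if_left_inverse:
  assumes \<sigma>: "mpt \<sigma>" and \<sigma>': "mpt \<sigma>'" and left: "AE y in unit_int. \<sigma>' (\<sigma> y) = y"
  shows "AE u in unit_int. \<sigma> (\<sigma>' u) = u"
proof -
  note [measurable] = mpt_measurable[OF \<sigma>] mpt_measurable[OF \<sigma>'] measurable_ident_unit_int
  \<comment> \<open>Pulled back along \<open>\<sigma>\<close>, both sides agree by \<open>left\<close>; rational thresholds then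
    separate \<open>\<sigma> (\<sigma>' u)\<close> from \<open>u\<close>.\<close>
  have "AE u in unit_int. \<sigma> (\<sigma>' u) \<le> q \<longleftrightarrow> u \<le> q" for q :: real
  proof -
    have "Measurable.pred unit_int (\<lambda>u. \<sigma> (\<sigma>' u) \<le> q \<longleftrightarrow> u \<le> q)"
      by measurable
    moreover have "AE y in unit_int. \<sigma> (\<sigma>' (\<sigma> y)) \<le> q \<longleftrightarrow> \<sigma> y \<le> q"
      using left by eventually_elim simp
    ultimately show ?thesis
      using AE_mpt_comp_iff[OF \<sigma>] by blast
  qed
  then have "AE u in unit_int. \<forall>q\<in>\<rat>. \<sigma> (\<sigma>' u) \<le> q \<longleftrightarrow> u \<le> q"
    by (subst AE_ball_countable) (simp_all add: countable_rat)
  then show ?thesis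
  proof eventually_elim
    case (elim u)
    show ?case
    proof (rule ccontr)
      assume "\<sigma> (\<sigma>' u) \<noteq> u"
      then have "min (\<sigma> (\<sigma>' u)) u < max (\<sigma> (\<sigma>' u)) u"
        by (auto simp: min_def max_def)
      then obtain q where "q \<in> \<rat>" "min (\<sigma> (\<sigma>' u)) u < q" "q < max (\<sigma> (\<sigma>' u)) u"
        using Rats_dense_in_real by blast
      then show False
        using elim by (auto simp: min_def max_def split: if_splits)
    qed
  qed
qed

section \<open>Ergodicity and conjugation\<close>

lemma ergodic_map_AE_invariant:
  assumes erg: "ergodic_map T" and B: "B \<in> sets unit_int"
    and inv: "AE x in unit_int. x \<in> B \<longleftrightarrow> T x \<in> B"
  shows "measure unit_int B = 0 \<or> measure unit_int B = 1"
proof -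
  have T: "mpt T"
    using erg by (simp add: ergodic_map_def)
  have [measurable]: "T ^^ k \<in> unit_int \<rightarrow>\<^sub>M unit_int" "B \<in> sets unit_int" for k
    using mpt_measurable[OF mpt_funpow[OF T]] B by auto
  have "AE x in unit_int. \<forall>k. (T ^^ k) x \<in> B \<longleftrightarrow> (T ^^ Suc k) x \<in> B"
    unfolding AE_all_countable using AE_mpt_comp[OF mpt_funpow[OF T] inv] by simp
  then have orbit: "AE x in unit_int. \<forall>k. (T ^^ k) x \<in> B \<longleftrightarrow> x \<in> B"
  proof eventually_elim
    case (elim x)
    show ?case
    proof
      show "(T ^^ k) x \<in> B \<longleftrightarrow> x \<in> B" for k
        by (induction k) (use elim in auto)
    qed
  qed
  \<comment> \<open>The points whose orbit visits \<open>B\<close> infinitely often form a strictly invariant version of \<open>B\<close>.\<close>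
  define C where "C = {x \<in> space unit_int. \<exists>\<^sub>F k in sequentially. (T ^^ k) x \<in> B}"
  have C: "C \<in> sets unit_int"
    unfolding C_def frequently_sequentially by measurable
  have "(T ^^ k) (T x) = (T ^^ Suc k) x" for k x
    by (simp only: funpow_Suc_right comp_apply)
  then have "(\<exists>\<^sub>F k in sequentially. (T ^^ k) (T x) \<in> B) \<longleftrightarrow> (\<exists>\<^sub>F k in sequentially. (T ^^ k) x \<in> B)"
    for x using eventually_sequentially_Suc[of "\<lambda>k. (T ^^ k) x \<notin> B"] by (simp add: frequently_def)
  then have "T -` C \<inter> space unit_int = C"
    using mpt_in_unit_int[OF T] by (auto simp: C_def)
  then have "measure unit_int C = 0 \<or> measure unit_int C = 1"
    using erg C by (simp add: ergodic_map_def)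
  moreover have "AE x in unit_int. x \<in> C \<longleftrightarrow> x \<in> B"
    using orbit AE_space by eventually_elim (auto simp: C_def)
  then have "measure unit_int C = measure unit_int B"
    using C B by (intro measure_eq_AE) auto
  ultimately show ?thesis
    by simp
qed

lemma ergodic_map_conj:
  assumes erg: "ergodic_map \<tau>" and iso: "inv_mpt_with \<sigma> \<sigma>'"
  shows "ergodic_map (\<lambda>x. \<sigma> (\<tau> (\<sigma>' x)))"
  unfolding ergodic_map_def
proof (intro conjI ballI impI)
  have \<tau>: "mpt \<tau>"
    using erg by (simp add: ergodic_map_def)
  have \<sigma>: "mpt \<sigma>" and \<sigma>': "mpt \<sigma>'" and \<sigma>'\<sigma>: "AE x in unit_int. \<sigma>' (\<sigma> x) = x"
    using iso by (auto simp: inv_mpt_with_def)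
  show "mpt (\<lambda>x. \<sigma> (\<tau> (\<sigma>' x)))"
    using mpt_comp[OF \<sigma> mpt_comp[OF \<tau> \<sigma>']] .
  fix A
  assume A: "A \<in> sets unit_int" and inv: "(\<lambda>x. \<sigma> (\<tau> (\<sigma>' x))) -` A \<inter> space unit_int = A"
  define B where "B = \<sigma> -` A \<inter> {0..1}"
  have B: "B \<in> sets unit_int"
    unfolding B_def using sets_mpt_vimage[OF \<sigma> A] .
  have "AE x in unit_int. x \<in> B \<longleftrightarrow> \<tau> x \<in> B"
    using \<sigma>'\<sigma> AE_mpt_comp[OF \<tau> \<sigma>'\<sigma>] AE_space
  proof eventually_elim
    case (elim x)
    have "\<sigma> x \<in> A \<longleftrightarrow> \<sigma> x \<in> (\<lambda>x. \<sigma> (\<tau> (\<sigma>' x))) -` A \<inter> space unit_int"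
      by (subst inv) (rule refl)
    then have "\<sigma> x \<in> A \<longleftrightarrow> \<sigma> (\<tau> (\<sigma>' (\<sigma> x))) \<in> A"
      using elim mpt_in_unit_int[OF \<sigma>] by simp
    then show ?case
      using elim mpt_in_unit_int[OF \<tau>] by (simp add: B_def)
  qed
  then have "measure unit_int B = 0 \<or> measure unit_int B = 1"
    by (rule ergodic_map_AE_invariant[OF erg B])
  then show "measure unit_int A = 0 \<or> measure unit_int A = 1"
    using measure_mpt_vimage[OF \<sigma> A] by (simp add: B_def)
qed

lemma inv_mpt_with_conj:
  assumes iso: "inv_mpt_with \<sigma> \<sigma>'" and inv: "inv_mpt_with \<tau> S"
  shows "inv_mpt_with (\<lambda>x. \<sigma> (\<tau> (\<sigma>' x))) (\<lambda>x. \<sigma> (S (\<sigma>' x)))"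
proof -
  have \<tau>: "mpt \<tau>" and S: "mpt S"
    and S\<tau>: "AE x in unit_int. S (\<tau> x) = x" and \<tau>S: "AE x in unit_int. \<tau> (S x) = x"
    using inv by (auto simp: inv_mpt_with_def)
  have \<sigma>: "mpt \<sigma>" and \<sigma>': "mpt \<sigma>'"
    and \<sigma>'\<sigma>: "AE x in unit_int. \<sigma>' (\<sigma> x) = x" and \<sigma>\<sigma>': "AE x in unit_int. \<sigma> (\<sigma>' x) = x"
    using iso by (auto simp: inv_mpt_with_def)
  have "AE x in unit_int. \<sigma> (S (\<sigma>' (\<sigma> (\<tau> (\<sigma>' x))))) = x"
    using AE_mpt_comp[OF mpt_comp[OF \<tau> \<sigma>'] \<sigma>'\<sigma>] AE_mpt_comp[OF \<sigma>' S\<tau>] \<sigma>\<sigma>'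
    by eventually_elim simp
  moreover have "AE x in unit_int. \<sigma> (\<tau> (\<sigma>' (\<sigma> (S (\<sigma>' x))))) = x"
    using AE_mpt_comp[OF mpt_comp[OF S \<sigma>'] \<sigma>'\<sigma>] AE_mpt_comp[OF \<sigma>' \<tau>S] \<sigma>\<sigma>'
    by eventually_elim simp
  ultimately show ?thesis
    unfolding inv_mpt_with_def
    by (simp add: mpt_comp[OF \<sigma> mpt_comp[OF \<tau> \<sigma>']] mpt_comp[OF \<sigma> mpt_comp[OF S \<sigma>']])
qed

lemma AE_funpow_conj:
  assumes iso: "inv_mpt_with \<sigma> \<sigma>'" and \<tau>: "mpt \<tau>"
  shows "AE x in unit_int. \<forall>n. ((\<lambda>x. \<sigma> (\<tau> (\<sigma>' x))) ^^ n) x = \<sigma> ((\<tau> ^^ n) (\<sigma>' x))"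
proof -
  have \<sigma>': "mpt \<sigma>'" and \<sigma>'\<sigma>: "AE x in unit_int. \<sigma>' (\<sigma> x) = x"
    and \<sigma>\<sigma>': "AE x in unit_int. \<sigma> (\<sigma>' x) = x"
    using iso by (auto simp: inv_mpt_with_def)
  have "AE x in unit_int. \<forall>n. \<sigma>' (\<sigma> ((\<tau> ^^ n) (\<sigma>' x))) = (\<tau> ^^ n) (\<sigma>' x)"
    unfolding AE_all_countable using AE_mpt_comp[OF mpt_comp[OF mpt_funpow[OF \<tau>] \<sigma>'] \<sigma>'\<sigma>] by blast
  then show ?thesis
    using \<sigma>\<sigma>'
  proof eventually_elim
    case (elim x)
    show ?case
    proof
      show "((\<lambda>x. \<sigma> (\<tau> (\<sigma>' x))) ^^ n) x = \<sigma> ((\<tau> ^^ n) (\<sigma>' x))" for n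
        by (induction n) (use elim in auto)
    qed
  qed
qed

section \<open>Uniformly distributed maps\<close>

lemma completion_restrict_space:
  assumes \<Omega>: "\<Omega> \<in> sets M"
  shows "completion (restrict_space M \<Omega>) = restrict_space (completion M) \<Omega>"
proof (rule measure_eqI)
  have null_sets_restrict: "N \<in> null_sets (restrict_space M \<Omega>) \<longleftrightarrow> N \<subseteq> \<Omega> \<and> N \<in> null_sets M" for N
    using null_sets_restrict_space[OF \<Omega>] by auto
  have sets_restrict: "S \<in> sets (restrict_space M \<Omega>) \<longleftrightarrow> S \<subseteq> \<Omega> \<and> S \<in> sets M" for S
    using \<Omega> by (simp add: sets_restrict_space_iff)
  show sets_eq: "sets (completion (restrict_space M \<Omega>)) = sets (restrict_space (completion M) \<Omega>)"
  proof (intro set_eqI iffI)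
    fix A
    assume "A \<in> sets (completion (restrict_space M \<Omega>))"
    then obtain S N N' where "A = S \<union> N" "N \<subseteq> N'" "N' \<in> null_sets (restrict_space M \<Omega>)"
      "S \<in> sets (restrict_space M \<Omega>)"
      by (rule sets_completionE)
    then show "A \<in> sets (restrict_space (completion M) \<Omega>)"
      using \<Omega> sets_completionI[of A S N N' M]
      by (auto simp: sets_restrict_space_iff null_sets_restrict sets_restrict)
  next
    fix A
    assume "A \<in> sets (restrict_space (completion M) \<Omega>)"
    then have A: "A \<subseteq> \<Omega>" "A \<in> sets (completion M)"
      using \<Omega> by (auto simp: sets_restrict_space_iff)
    then obtain S N N' where "A = S \<union> N" "N \<subseteq> N'" "N' \<in> null_sets M" "S \<in> sets M"
      by (auto elim: sets_completionE)
    moreover have "N' \<inter> \<Omega> \<in> null_sets M" "S \<inter> \<Omega> \<in> sets M"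
      using \<Omega> \<open>N' \<in> null_sets M\<close> \<open>S \<in> sets M\<close> by (auto intro: null_set_Int2)
    ultimately show "A \<in> sets (completion (restrict_space M \<Omega>))"
      using A by (intro sets_completionI[of A "S \<inter> \<Omega>" "N \<inter> \<Omega>" "N' \<inter> \<Omega>"])
        (auto simp: null_sets_restrict sets_restrict)
  qed
  fix A
  assume "A \<in> sets (completion (restrict_space M \<Omega>))"
  then obtain S N N' where SN: "A = S \<union> N" "N \<subseteq> N'" "N' \<in> null_sets (restrict_space M \<Omega>)"
    "S \<in> sets (restrict_space M \<Omega>)"
    by (rule sets_completionE)
  have null: "N \<in> null_sets (completion (restrict_space M \<Omega>))" "N \<in> null_sets (completion M)"
    using null_sets_completion_subset[OF SN(2) null_sets_completionI] SN(3)
    by (auto simp: null_sets_restrict)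
  have "emeasure (completion (restrict_space M \<Omega>)) A = emeasure M S"
    using SN emeasure_Un_null_set[OF _ null(1), of S] \<Omega>
    by (simp add: emeasure_restrict_space sets_restrict sets.Int_space_eq2)
  also have "\<dots> = emeasure (restrict_space (completion M) \<Omega>) A"
    using SN emeasure_Un_null_set[OF _ null(2), of S] \<Omega> null_sets_restrict[of N']
    by (subst emeasure_restrict_space) (auto simp: sets_restrict sets.Int_space_eq2)
  finally show
    "emeasure (completion (restrict_space M \<Omega>)) A = emeasure (restrict_space (completion M) \<Omega>) A" .
qed

lemma unit_int_eq_completion: "unit_int = completion (restrict_space lborel {0..1})"
  using completion_restrict_space[of "{0..1::real}" lborel] by simp

lemma complete_measure_unit_int: "complete_measure unit_int"
  by (subst unit_int_eq_completion) (rule completion.complete_measure_axioms)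

lemma mpt_if_uniform:
  assumes g: "g \<in> borel_measurable unit_int" and into: "\<And>x. x \<in> {0..1} \<Longrightarrow> g x \<in> {0..1}"
    and uniform: "distr unit_int borel g = distr unit_int borel (\<lambda>x. x)"
  shows "mpt g"
proof -
  \<comment> \<open>The hypothesis only concerns Borel sets; completeness of \<open>unit_int\<close> extends it
    to Lebesgue sets.\<close>
  let ?L = "restrict_space lborel {0..1::real}"
  interpret complete_measure unit_int
    by (rule complete_measure_unit_int)
  have gL: "g \<in> unit_int \<rightarrow>\<^sub>M ?L"
    using g into by (intro measurable_restrict_space2) auto
  have law: "distr unit_int ?L g = ?L"
  proof (rule measure_eqI)
    fix X
    assume "X \<in> sets (distr unit_int ?L g)"
    then have X: "X \<subseteq> {0..1}" "X \<in> sets borel"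
      by (auto simp: sets_restrict_space_iff)
    have "emeasure (distr unit_int ?L g) X = emeasure (distr unit_int borel g) X"
      using X by (simp add: emeasure_distr gL g sets_restrict_space_iff)
    also have "\<dots> = emeasure unit_int X"
      using X by (simp add: uniform emeasure_distr measurable_ident_unit_int Int_absorb2)
    also have "\<dots> = emeasure ?L X"
      using X by (simp add: emeasure_restrict_space)
    finally show "emeasure (distr unit_int ?L g) X = emeasure ?L X" .
  qed simp
  then have null: "null_sets (distr unit_int ?L g) = null_sets ?L"
    by simp
  have "g \<in> unit_int \<rightarrow>\<^sub>M completion ?L"
    using null by (intro measurable_completion2[OF gL]) simp
  moreover have "distr unit_int (completion ?L) g = completion ?L"
    using completion_distr_eq[OF gL null] law by simp
  ultimately show ?thesis
    unfolding mpt_def by (simp add: unit_int_eq_completion[symmetric])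
qed

abbreviation lborel_open_unit :: "real measure" where
  "lborel_open_unit \<equiv> restrict_space lborel {0<..<1}"

lemma AE_unit_int_neq: "AE x in unit_int. x \<noteq> c"
  using AE_completion[OF AE_lborel_singleton[of c]] by (subst AE_restrict_space_iff) auto

lemma distr_unit_int_eq_open:
  assumes g: "g \<in> borel_measurable borel"
  shows "distr unit_int borel g = distr lborel_open_unit borel g"
proof (rule measure_eqI)
  fix X
  assume "X \<in> sets (distr unit_int borel g)"
  then have X: "X \<in> sets borel" and gX: "g -` X \<in> sets borel"
    using measurable_sets_borel[OF g] by auto
  have "g \<in> borel_measurable unit_int" "g \<in> borel_measurable lborel_open_unit"
    using g by (auto intro!: measurable_restrict_space1 measurable_completion)
  then have "emeasure (distr unit_int borel g) X = emeasure lborel (g -` X \<inter> {0..1})"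
    using X gX by (simp add: emeasure_distr emeasure_restrict_space)
  also have "\<dots> = emeasure lborel (g -` X \<inter> {0<..<1})"
    using gX AE_lborel_singleton[of "0::real"] AE_lborel_singleton[of "1::real"]
    by (intro emeasure_eq_AE) auto
  also have "\<dots> = emeasure (distr lborel_open_unit borel g) X"
    using X gX \<open>g \<in> borel_measurable lborel_open_unit\<close>
    by (simp add: emeasure_distr emeasure_restrict_space space_restrict_space)
  finally show "emeasure (distr unit_int borel g) X = emeasure (distr lborel_open_unit borel g) X" .
qed simp

section \<open>Straightening a map into an automorphism\<close>

locale unit_int_embedding =
  fixes \<kappa> \<kappa>' :: "real \<Rightarrow> real"
  assumes measurable_\<kappa> [measurable]: "\<kappa> \<in> borel_measurable unit_int"
    and measurable_\<kappa>' [measurable]: "\<kappa>' \<in> borel_measurable borel"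
    and \<kappa>'_in_unit_int: "\<kappa>' s \<in> {0..1}"
    and \<kappa>'_\<kappa>: "y \<in> {0..1} \<Longrightarrow> \<kappa>' (\<kappa> y) = y"
begin

definition law :: "real measure" where
  "law = distr unit_int borel \<kappa>"

sublocale law: cdf_distribution law
  unfolding law_def
  by (intro cdf_distribution.intro real_distribution.intro real_distribution_axioms.intro
      unit.prob_space_distr) simp_all

lemma isCont_cdf_law: "isCont (cdf law) x"
proof -
  have "measure law {x} = measure unit_int (\<kappa> -` {x} \<inter> space unit_int)"
    unfolding law_def by (rule measure_distr) simp_all
  also have "\<dots> = measure unit_int {}"
    using AE_unit_int_neq[of "\<kappa>' x"] AE_space measurable_sets[OF measurable_\<kappa>, of "{x}"]
    by (intro measure_eq_AE) (auto simp: \<kappa>'_\<kappa>)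
  finally show ?thesis
    by (simp add: law.isCont_cdf)
qed

lemma cdf_law_quantile:
  assumes u: "u \<in> {0<..<1}"
  shows "cdf law (law.I u) = u"
proof (rule antisym)
  let ?q = "law.I u"
  have below: "cdf law x < u \<longleftrightarrow> x < ?q" for x
    using law.pseudoinverse[of u x] u by auto
  show "cdf law ?q \<le> u"
  proof (rule tendsto_upperbound)
    show "(cdf law \<longlongrightarrow> cdf law ?q) (at_left ?q)"
      using isCont_cdf_law[of ?q] by (simp add: isCont_def filterlim_at_split)
    show "\<forall>\<^sub>F x in at_left ?q. cdf law x \<le> u"
    proof (rule eventually_mono)
      show "\<forall>\<^sub>F x in at_left ?q. x \<in> {?q - 1<..<?q}"
        by (rule eventually_at_left_real) simp
    qed (auto simp: below less_imp_le)
  qed simp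
  show "u \<le> cdf law ?q"
    using below[of ?q] by simp
qed

definition quantile :: "real \<Rightarrow> real" where
  "quantile u = (if u \<in> {0<..<1} then law.I u else 0)"

lemma measurable_quantile [measurable]: "quantile \<in> borel_measurable borel"
  using law.measurable_CI unfolding quantile_def
  by (subst (asm) measurable_restrict_space_iff) auto

lemma distr_quantile: "distr lborel_open_unit borel quantile = law"
proof -
  have "distr lborel_open_unit borel quantile = distr lborel_open_unit borel law.I"
    by (rule distr_cong) (auto simp: quantile_def space_restrict_space)
  then show ?thesis
    by (simp add: law.distr_I_eq_M)
qed

lemma distr_law_eq_quantile:
  assumes [measurable]: "g \<in> borel_measurable borel"
  shows "distr law borel g = distr lborel_open_unit borel (\<lambda>u. g (quantile u))"
proof -
  have "quantile \<in> borel_measurable lborel_open_unit"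
    by (intro measurable_restrict_space1) simp
  then show ?thesis
    unfolding distr_quantile[symmetric] by (subst distr_distr) (simp_all add: comp_def)
qed

lemma AE_law_if_AE_quantile:
  assumes "Measurable.pred borel P" and "AE u in lborel_open_unit. P (quantile u)"
  shows "AE s in law. P s"
proof -
  have "quantile \<in> borel_measurable lborel_open_unit"
    by (intro measurable_restrict_space1) simp
  then show ?thesis
    using assms unfolding distr_quantile[symmetric] by (subst AE_distr_iff) (simp_all add: pred_def)
qed

definition straighten :: "real \<Rightarrow> real" where
  "straighten y = cdf law (\<kappa> y)"

definition unstraighten :: "real \<Rightarrow> real" where
  "unstraighten u = \<kappa>' (quantile u)"

lemma straighten_eq_measure:
  "straighten y = measure unit_int {z \<in> {0..1}. \<kappa> z \<le> \<kappa> y}"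
proof -
  have "straighten y = measure law {..\<kappa> y}"
    unfolding straighten_def by (simp add: cdf_def)
  also have "\<dots> = measure unit_int (\<kappa> -` {..\<kappa> y} \<inter> space unit_int)"
    unfolding law_def by (rule measure_distr) simp_all
  also have "\<kappa> -` {..\<kappa> y} \<inter> space unit_int = {z \<in> {0..1}. \<kappa> z \<le> \<kappa> y}"
    by auto
  finally show ?thesis .
qed

lemma mpt_straighten: "mpt straighten"
proof (rule mpt_if_uniform)
  show "straighten \<in> borel_measurable unit_int"
    unfolding straighten_def by measurable
  show "straighten x \<in> {0..1}" for x
    unfolding straighten_def using law.cdf_nonneg law.cdf_bounded_prob by auto
  have "distr unit_int borel straighten = distr law borel (cdf law)"
    using distr_distr[OF law.measurable_C measurable_\<kappa>]
    by (simp add: comp_def straighten_def[abs_def] flip: law_def)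
  also have "\<dots> = distr lborel_open_unit borel (\<lambda>u. cdf law (quantile u))"
    by (simp add: distr_law_eq_quantile)
  also have "\<dots> = distr lborel_open_unit borel (\<lambda>u. u)"
    by (rule distr_cong) (auto simp: space_restrict_space quantile_def cdf_law_quantile)
  also have "\<dots> = distr unit_int borel (\<lambda>u. u)"
    by (rule distr_unit_int_eq_open[symmetric]) simp
  finally show "distr unit_int borel straighten = distr unit_int borel (\<lambda>u. u)" .
qed

lemma mpt_unstraighten: "mpt unstraighten"
proof (rule mpt_if_uniform)
  show "unstraighten \<in> borel_measurable unit_int"
    unfolding unstraighten_def by (intro measurable_restrict_space1 measurable_completion) simp
  show "unstraighten x \<in> {0..1}" for x
    unfolding unstraighten_def by (rule \<kappa>'_in_unit_int)
  have "distr unit_int borel unstraighten = distr lborel_open_unit borel unstraighten"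
    unfolding unstraighten_def by (rule distr_unit_int_eq_open) simp
  also have "\<dots> = distr law borel \<kappa>'"
    by (simp add: distr_law_eq_quantile unstraighten_def[abs_def])
  also have "\<dots> = distr unit_int borel (\<lambda>y. \<kappa>' (\<kappa> y))"
    unfolding law_def by (subst distr_distr) (simp_all add: comp_def)
  also have "\<dots> = distr unit_int borel (\<lambda>y. y)"
    by (rule distr_cong) (simp_all add: \<kappa>'_\<kappa>)
  finally show "distr unit_int borel unstraighten = distr unit_int borel (\<lambda>y. y)" .
qed

lemma AE_unstraighten_straighten: "AE y in unit_int. unstraighten (straighten y) = y"
proof -
  have "AE u in lborel_open_unit. quantile (cdf law (quantile u)) = quantile u"
    using AE_space
    by eventually_elim (simp add: space_restrict_space quantile_def cdf_law_quantile)
  then have "AE s in law. quantile (cdf law s) = s"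
    by (intro AE_law_if_AE_quantile) measurable
  then have "AE y in unit_int. quantile (cdf law (\<kappa> y)) = \<kappa> y"
    unfolding law_def by (rule AE_distrD[rotated]) simp
  then show ?thesis
    using AE_space by eventually_elim (simp add: unstraighten_def straighten_def \<kappa>'_\<kappa>)
qed

text \<open>As \<open>\<kappa>\<close> is only Lebesgue measurable, \<open>{s. \<kappa> (\<kappa>' s) = s}\<close> need not be a Borel set, so the
  second inverse law is not transported along \<open>quantile\<close> but derived abstractly.\<close>

lemma inv_mpt_with_straighten: "inv_mpt_with straighten unstraighten"
  unfolding inv_mpt_with_def
  using mpt_straighten mpt_unstraighten AE_unstraighten_straighten
    AE_right_inverse_if_left_inverse[OF mpt_straighten mpt_unstraighten AE_unstraighten_straighten]
  by simp

end

lemma exists_inv_mpt_above_upper_levels: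
  fixes h :: "real \<Rightarrow> nat"
  assumes h: "h \<in> unit_int \<rightarrow>\<^sub>M count_space UNIV"
  shows "\<exists>\<sigma> \<sigma>'. inv_mpt_with \<sigma> \<sigma>' \<and>
           (\<forall>y\<in>{0..1}. measure unit_int {z \<in> {0..1}. h y < h z} \<le> \<sigma> y)"
proof -
  \<comment> \<open>Place the level sets of \<open>h\<close> side by side on the real line, higher levels further left.\<close>
  define \<kappa> where "\<kappa> y = y / 2 - real (h y)" for y
  define \<kappa>' where "\<kappa>' s = min 1 (2 * frac s)" for s :: real
  interpret unit_int_embedding \<kappa> \<kappa>'
  proof
    have [measurable]: "(\<lambda>y. real (h y)) \<in> borel_measurable unit_int"
      by (rule measurable_compose[OF h]) simp
    show "\<kappa> \<in> borel_measurable unit_int"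
      unfolding \<kappa>_def using measurable_ident_unit_int by measurable
    show "\<kappa>' \<in> borel_measurable borel"
      unfolding \<kappa>'_def frac_def by measurable
    show "\<kappa>' s \<in> {0..1}" for s
      by (simp add: \<kappa>'_def)
    show "\<kappa>' (\<kappa> y) = y" if "y \<in> {0..1}" for y
    proof -
      have "frac (\<kappa> y) = frac (y / 2 + of_int (- int (h y)))"
        by (simp add: \<kappa>_def)
      also have "\<dots> = frac (y / 2)"
        by (rule frac_add_of_int_right)
      also have "\<dots> = y / 2"
        using that by (simp add: frac_eq)
      finally show ?thesis
        using that by (simp add: \<kappa>'_def)
    qed
  qed
  show ?thesis
  proof (intro exI conjI ballI)
    show "inv_mpt_with straighten unstraighten"
      by (rule inv_mpt_with_straighten)
    fix y :: real
    assume y: "y \<in> {0..1}"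
    have "{z \<in> {0..1}. h y < h z} \<subseteq> {z \<in> {0..1}. \<kappa> z \<le> \<kappa> y}"
      using y by (auto simp: \<kappa>_def)
    moreover have "{z \<in> {0..1}. \<kappa> z \<le> \<kappa> y} \<in> sets unit_int"
      using measurable_sets[OF measurable_\<kappa>, of "{..\<kappa> y}"]
      by (simp add: vimage_def Int_def conj_commute)
    ultimately show "measure unit_int {z \<in> {0..1}. h y < h z} \<le> straighten y"
      unfolding straighten_eq_measure by (rule unit.finite_measure_mono)
  qed
qed

lemma exists_inv_mpt_straightening_decseq:
  assumes G: "\<And>K. G K \<in> sets unit_int" and dec: "decseq G"
    and exhaust: "AE y in unit_int. \<exists>K. y \<notin> G K"
  shows "\<exists>\<sigma> \<sigma>'. inv_mpt_with \<sigma> \<sigma>' \<and>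
           (AE y in unit_int. \<forall>K. \<sigma> y < measure unit_int (G K) \<longrightarrow> y \<in> G K)"
proof -
  define level where "level y = (LEAST K. y \<notin> G K)" for y
  have [measurable]: "G K \<in> sets unit_int" for K
    by (rule G)
  have level: "level \<in> unit_int \<rightarrow>\<^sub>M count_space UNIV"
    unfolding level_def by measurable
  then obtain \<sigma> \<sigma>' where iso: "inv_mpt_with \<sigma> \<sigma>'"
    and upper: "\<And>y. y \<in> {0..1} \<Longrightarrow> measure unit_int {z \<in> {0..1}. level y < level z} \<le> \<sigma> y"
    using exists_inv_mpt_above_upper_levels by blast
  have level_le: "level y \<le> K" if "y \<notin> G K" for y K
    unfolding level_def using that by (rule Least_le)
  have level_gt: "K < level z" if "z \<in> G K" and "z \<notin> G K'" for z K K'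
  proof (rule ccontr)
    assume "\<not> K < level z"
    then have "G K \<subseteq> G (level z)"
      using dec by (simp add: decseq_def)
    moreover have "z \<notin> G (level z)"
      unfolding level_def using that(2) by (rule LeastI)
    ultimately show False
      using that(1) by blast
  qed
  have "AE y in unit_int. \<forall>K. \<sigma> y < measure unit_int (G K) \<longrightarrow> y \<in> G K"
    using exhaust AE_space
  proof eventually_elim
    case (elim y)
    show ?case
    proof (intro allI impI)
      fix K
      assume small: "\<sigma> y < measure unit_int (G K)"
      show "y \<in> G K"
      proof (rule ccontr)
        assume "y \<notin> G K"
        have "AE z in unit_int. z \<in> G K \<longrightarrow> z \<in> {z \<in> {0..1}. level y < level z}"
          using exhaust
        proof eventually_elim
          case (elim z)
          then obtain K' where "z \<notin> G K'"
            by blast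
          then show ?case
            using level_le[OF \<open>y \<notin> G K\<close>] level_gt[of z K K'] sets.sets_into_space[OF G, of K]
            by auto
        qed
        moreover have "{z \<in> {0..1}. level y < level z} \<in> sets unit_int"
          using measurable_sets[OF level, of "{level y<..}"]
          by (simp add: vimage_def Int_def conj_commute)
        ultimately have "measure unit_int (G K) \<le> measure unit_int {z \<in> {0..1}. level y < level z}"
          by (rule unit.finite_measure_mono_AE)
        also have "\<dots> \<le> \<sigma> y"
          using elim by (intro upper) simp
        finally show False
          using small by simp
      qed
    qed
  qed
  with iso show ?thesis
    by blast
qed

section \<open>Sets avoided by backward orbits\<close>

locale ergodic_inv_mpt =
  fixes \<tau> S :: "real \<Rightarrow> real"
  assumes ergodic: "ergodic_map \<tau>" and inverse: "inv_mpt_with \<tau> S"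
begin

lemma mpt_\<tau>: "mpt \<tau>"
  using ergodic by (simp add: ergodic_map_def)

lemma mpt_S: "mpt S"
  using inverse by (simp add: inv_mpt_with_def)

lemma AE_S_\<tau>: "AE x in unit_int. S (\<tau> x) = x"
  using inverse by (simp add: inv_mpt_with_def)

text \<open>\<open>x \<in> past_avoiding A k\<close> iff none of \<open>x, S x, \<dots>, S\<^sup>k\<^sup>-\<^sup>1 x\<close> lies in \<open>A\<close>.\<close>

fun past_avoiding :: "real set \<Rightarrow> nat \<Rightarrow> real set" where
  "past_avoiding A 0 = {0..1}"
| "past_avoiding A (Suc k) = S -` past_avoiding A k \<inter> {0..1} - A"

lemma sets_past_avoiding: "A \<in> sets unit_int \<Longrightarrow> past_avoiding A k \<in> sets unit_int"
  by (induction k) (auto intro: sets_mpt_vimage[OF mpt_S])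

lemma decseq_past_avoiding: "decseq (past_avoiding A)"
proof (rule decseq_SucI)
  show "past_avoiding A (Suc k) \<subseteq> past_avoiding A k" for k
    by (induction k) auto
qed

lemma measure_past_avoiding_Suc:
  assumes A: "A \<in> sets unit_int"
  shows "measure unit_int (past_avoiding A k) - measure unit_int A
           \<le> measure unit_int (past_avoiding A (Suc k))"
proof -
  let ?P = "S -` past_avoiding A k \<inter> {0..1}"
  have P: "?P \<in> sets unit_int"
    using sets_mpt_vimage[OF mpt_S sets_past_avoiding[OF A]] .
  have "measure unit_int (past_avoiding A k) = measure unit_int ?P"
    using measure_mpt_vimage[OF mpt_S sets_past_avoiding[OF A]] by simp
  also have "\<dots> \<le> measure unit_int (?P - A) + measure unit_int A"
    using unit.finite_measure_Diff'[OF P A] unit.finite_measure_mono[of "?P \<inter> A" A] A by simp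
  finally show ?thesis
    by simp
qed

lemma past_avoiding_forever_null:
  assumes A: "A \<in> sets unit_int" and pos: "0 < measure unit_int A"
  shows "(\<Inter>k. past_avoiding A k) \<in> null_sets unit_int"
proof -
  define E where "E = (\<Inter>k. past_avoiding A k)"
  have E: "E \<in> sets unit_int"
    unfolding E_def using sets_past_avoiding[OF A] by auto
  have "AE x in unit_int. \<tau> x \<in> E \<longrightarrow> x \<in> E"
    using AE_S_\<tau>
  proof eventually_elim
    case (elim x)
    show ?case
    proof
      assume "\<tau> x \<in> E"
      then have "S (\<tau> x) \<in> past_avoiding A k" for k
        unfolding E_def by (metis INT_iff UNIV_I past_avoiding.simps(2) DiffD1 IntD1 vimageD)
      then show "x \<in> E"
        using elim by (simp add: E_def)
    qed
  qed
  then have "AE x in unit_int. x \<in> \<tau> -` E \<inter> {0..1} \<longrightarrow> x \<in> E"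
    by eventually_elim auto
  then have "AE x in unit_int. x \<in> \<tau> -` E \<inter> {0..1} \<longleftrightarrow> x \<in> E"
    using sets_mpt_vimage[OF mpt_\<tau> E] E measure_mpt_vimage[OF mpt_\<tau> E]
    by (intro unit.AE_eq_if_AE_subset_measure_eq) auto
  then have "AE x in unit_int. x \<in> E \<longleftrightarrow> \<tau> x \<in> E"
    using AE_space by eventually_elim auto
  then have "measure unit_int E = 0 \<or> measure unit_int E = 1"
    by (rule ergodic_map_AE_invariant[OF ergodic E])
  moreover have "measure unit_int E + measure unit_int A \<le> 1"
  proof -
    have "E \<inter> A = {}"
      unfolding E_def using past_avoiding.simps(2)[of A 0] by blast
    then show ?thesis
      using unit.finite_measure_Union[OF E A] unit.prob_le_1[of "E \<union> A"] by simp
  qed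
  ultimately have "measure unit_int E = 0"
    using pos by auto
  then show ?thesis
    using E by (simp add: E_def null_sets_def unit.emeasure_eq_measure)
qed

lemma AE_eventually_not_past_avoiding:
  assumes "A \<in> sets unit_int" and "0 < measure unit_int A"
  shows "AE y in unit_int. \<exists>k. y \<notin> past_avoiding A k"
  using AE_not_in[OF past_avoiding_forever_null[OF assms]] by simp

lemma measure_past_avoiding_tendsto_0:
  assumes A: "A \<in> sets unit_int" and "0 < measure unit_int A"
  shows "(\<lambda>k. measure unit_int (past_avoiding A k)) \<longlonglongrightarrow> 0"
proof -
  have "(\<lambda>k. measure unit_int (past_avoiding A k)) \<longlonglongrightarrow> measure unit_int (\<Inter>k. past_avoiding A k)"
    using sets_past_avoiding[OF A] decseq_past_avoiding
    by (intro unit.finite_Lim_measure_decseq) auto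
  then show ?thesis
    using past_avoiding_forever_null[OF assms] by (simp add: null_sets_def unit.emeasure_eq_measure)
qed

end

context ergodic_inv_mpt
begin

lemma exists_slowly_shrinking_past_avoiding:
  fixes \<delta> :: real and N :: nat
  assumes \<delta>: "0 < \<delta>" "\<delta> \<le> 1"
  shows "\<exists>A M. A \<in> sets unit_int \<and> 0 < measure unit_int A \<and>
           measure unit_int (past_avoiding A (Suc M)) < \<delta> \<and>
           (\<forall>n<N. \<delta> / 2 \<le> measure unit_int (past_avoiding A (2 * n + M)))"
proof -
  \<comment> \<open>Each step loses at most \<open>measure A = a\<close>; \<open>M\<close> is the last time the measure is \<open>\<ge> \<delta>\<close>,
    and the following \<open>2 N\<close> steps lose less than \<open>\<delta> / 2\<close>.\<close>
  define a :: real where "a = \<delta> / (4 * (real N + 1))"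
  define A where "A = {0..a}"
  have a: "0 < a" "a \<le> 1"
    using \<delta> by (auto simp: a_def field_simps)
  have A: "A \<in> sets unit_int" "measure unit_int A = a"
    using a by (auto simp: A_def measure_restrict_space sets_restrict_space_iff)
  have "eventually (\<lambda>k. measure unit_int (past_avoiding A k) < \<delta>) sequentially"
    using measure_past_avoiding_tendsto_0[of A] A a \<delta> by (simp add: order_tendstoD(2))
  then obtain k where k: "measure unit_int (past_avoiding A k) < \<delta>"
    by (auto simp: eventually_sequentially)
  have "measure unit_int (past_avoiding A 0) = 1"
    by (simp add: measure_restrict_space)
  then obtain M where M: "\<delta> \<le> measure unit_int (past_avoiding A M)"
    "measure unit_int (past_avoiding A (Suc M)) < \<delta>"
    using ex_least_nat_less[of "\<lambda>k. measure unit_int (past_avoiding A k) < \<delta>" k] k \<delta>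
    by (auto simp: not_less)
  have decay: "\<delta> - real j * a \<le> measure unit_int (past_avoiding A (M + j))" for j
  proof (induction j)
    case (Suc j)
    then show ?case
      using measure_past_avoiding_Suc[OF A(1), of "M + j"] A(2) by (simp add: algebra_simps)
  qed (use M in simp)
  have "\<delta> / 2 \<le> measure unit_int (past_avoiding A (2 * n + M))" if "n < N" for n
  proof -
    have "real (2 * n) * a \<le> real (2 * N) * a"
      using that a by (intro mult_right_mono) auto
    also have "\<dots> \<le> \<delta> / 2"
      using \<delta> by (simp add: a_def field_simps)
    finally show ?thesis
      using decay[of "2 * n"] by (simp add: add.commute)
  qed
  then show ?thesis
    using A a M by blast
qed

lemma past_avoiding_of_funpow:
  assumes orbit: "\<forall>j. S (\<tau> ((\<tau> ^^ j) y)) = (\<tau> ^^ j) y"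
    and "(\<tau> ^^ n) y \<in> past_avoiding A (k + n)"
  shows "y \<in> past_avoiding A k"
  using assms
proof (induction n arbitrary: y k)
  case (Suc n)
  have "\<forall>j. S (\<tau> ((\<tau> ^^ j) (\<tau> y))) = (\<tau> ^^ j) (\<tau> y)"
    using Suc.prems(1) by (metis comp_apply funpow_Suc_right)
  moreover have "(\<tau> ^^ n) (\<tau> y) \<in> past_avoiding A (Suc k + n)"
    using Suc.prems(2) by (simp add: funpow_Suc_right del: funpow.simps)
  ultimately have "\<tau> y \<in> past_avoiding A (Suc k)"
    by (rule Suc.IH)
  then show ?case
    using Suc.prems(1)[rule_format, of 0] by simp
qed simp

lemma AE_S_\<tau>_orbit: "AE y in unit_int. \<forall>j. S (\<tau> ((\<tau> ^^ j) y)) = (\<tau> ^^ j) y"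
  unfolding AE_all_countable using AE_mpt_comp[OF mpt_funpow[OF mpt_\<tau>] AE_S_\<tau>] by blast

end

section \<open>Traps and invisible targets\<close>

lemma (in prob_space) AE_eventually_notin_shifted_Union:
  fixes B :: "nat \<Rightarrow> nat \<Rightarrow> 'a set" and c :: "nat \<Rightarrow> nat"
  assumes B: "\<And>i k. B i k \<in> events" and dec: "\<And>i. decseq (B i)"
    and exhaust: "\<And>i. AE x in M. \<exists>k. x \<notin> B i k"
    and summable: "summable (\<lambda>i. prob (B i (c i)))"
  shows "AE x in M. \<exists>K. \<forall>i. x \<notin> B i (K + c i)"
proof -
  have "AE x in M. eventually (\<lambda>i. x \<in> space M - B i (c i)) sequentially"
    using B summable by (intro borel_cantelli_AE1) (simp_all add: emeasure_eq_measure)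
  moreover have "AE x in M. \<forall>i. \<exists>k. x \<notin> B i k"
    using exhaust by (simp add: AE_all_countable)
  ultimately show ?thesis
  proof eventually_elim
    case (elim x)
    then obtain N where N: "\<And>i. N \<le> i \<Longrightarrow> x \<notin> B i (c i)"
      by (auto simp: eventually_sequentially)
    have "eventually (\<lambda>k. x \<notin> B i k) sequentially" for i
    proof -
      obtain k where "x \<notin> B i k"
        using elim(2) by blast
      then show ?thesis
        using dec[of i] unfolding eventually_sequentially decseq_def by blast
    qed
    then have "eventually (\<lambda>k. \<forall>i\<in>{..<N}. x \<notin> B i k) sequentially"
      by (intro eventually_ball_finite) auto
    then obtain K where K: "\<And>i. i < N \<Longrightarrow> x \<notin> B i K"
      unfolding eventually_sequentially by blast
    have "x \<notin> B i (K + c i)" for i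
    proof (cases "i < N")
      case True
      then show ?thesis
        using K[OF True] dec[of i] unfolding decseq_def by (meson le_add1 subsetD)
    next
      case False
      then show ?thesis
        using N[of i] dec[of i] unfolding decseq_def by (meson le_add2 not_le subsetD)
    qed
    then show ?case
      by blast
  qed
qed

lemma exists_dyadic_bracket:
  fixes e :: real
  assumes "0 < e" and "e < 1/2"
  shows "\<exists>i. (1/2) ^ (i + 2) \<le> e \<and> e < (1/2) ^ (i + 1)"
proof -
  obtain n where "(1/2::real) ^ n < e"
    using real_arch_pow_inv[OF \<open>0 < e\<close>, of "1/2"] by auto
  moreover have "(1/2::real) ^ (n + 1) \<le> (1/2) ^ n"
    by (intro power_decreasing) auto
  ultimately obtain k where k: "(1/2::real) ^ (k + 1) \<le> e" "\<forall>i<k. \<not> (1/2::real) ^ (i + 1) \<le> e"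
    using ex_least_nat_le[of "\<lambda>i. (1/2::real) ^ (i + 1) \<le> e" "n + 1"] assms by auto
  moreover obtain j where "k = Suc j"
    using k(1) assms by (cases k) auto
  ultimately show ?thesis
    by (intro exI[of _ j]) (simp add: not_le)
qed

context ergodic_inv_mpt
begin

lemma exists_dyadic_past_avoiding_family:
  fixes \<epsilon> :: "nat \<Rightarrow> real"
  assumes lim: "\<epsilon> \<longlonglongrightarrow> 0"
  shows "\<exists>N A M. \<forall>i. A i \<in> sets unit_int \<and> 0 < measure unit_int (A i) \<and>
           (\<forall>n\<ge>N i. \<epsilon> n < (1/2) ^ (i + 2)) \<and>
           measure unit_int (past_avoiding (A i) (Suc (M i))) < (1/2) ^ i \<and>
           (\<forall>n<N i. (1/2) ^ (i + 1) \<le> measure unit_int (past_avoiding (A i) (2 * n + M i)))"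
proof -
  have "\<exists>N A M. A \<in> sets unit_int \<and> 0 < measure unit_int A \<and> (\<forall>n\<ge>N. \<epsilon> n < (1/2) ^ (i + 2)) \<and>
          measure unit_int (past_avoiding A (Suc M)) < (1/2) ^ i \<and>
          (\<forall>n<N. (1/2) ^ (i + 1) \<le> measure unit_int (past_avoiding A (2 * n + M)))" for i
  proof -
    obtain N where "\<forall>n\<ge>N. \<epsilon> n < (1/2) ^ (i + 2)"
      using order_tendstoD(2)[OF lim, of "(1/2) ^ (i + 2)"] by (auto simp: eventually_sequentially)
    moreover have "0 < (1/2::real) ^ i" "(1/2::real) ^ i \<le> 1"
      by (simp_all add: power_le_one)
    ultimately show ?thesis
      using exists_slowly_shrinking_past_avoiding[of "(1/2) ^ i" N] by auto
  qed
  then show ?thesis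
    by (simp add: choice_iff) metis
qed

definition trap :: "(nat \<Rightarrow> real set) \<Rightarrow> (nat \<Rightarrow> nat) \<Rightarrow> nat \<Rightarrow> real set" where
  "trap A M K = (\<Union>i. past_avoiding (A i) (K + M i))"

lemma sets_trap: "(\<And>i. A i \<in> sets unit_int) \<Longrightarrow> trap A M K \<in> sets unit_int"
  unfolding trap_def using sets_past_avoiding by blast

lemma decseq_trap: "decseq (trap A M)"
  unfolding decseq_def trap_def
proof (intro allI impI UN_mono subset_refl)
  fix m n i :: nat
  assume "m \<le> n"
  then show "past_avoiding (A i) (n + M i) \<subseteq> past_avoiding (A i) (m + M i)"
    using decseq_past_avoiding[of "A i"] by (simp add: decseq_def)
qed

lemma AE_eventually_not_trap:
  assumes A: "\<And>i. A i \<in> sets unit_int" "\<And>i. 0 < measure unit_int (A i)"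
    and summable: "summable (\<lambda>i. measure unit_int (past_avoiding (A i) (Suc (M i))))"
  shows "AE y in unit_int. \<exists>K. y \<notin> trap A M K"
proof -
  have "AE y in unit_int. \<exists>K. \<forall>i. y \<notin> past_avoiding (A i) (K + Suc (M i))"
    using sets_past_avoiding[OF A(1)] decseq_past_avoiding AE_eventually_not_past_avoiding[OF A]
      summable
    by (intro unit.AE_eventually_notin_shifted_Union) auto
  then show ?thesis
  proof eventually_elim
    case (elim y)
    then obtain K where "\<forall>i. y \<notin> past_avoiding (A i) (Suc K + M i)"
      by (metis add_Suc_shift)
    then show ?case
      unfolding trap_def by blast
  qed
qed

lemma AE_trap_of_funpow: "AE y in unit_int. \<forall>n. (\<tau> ^^ n) y \<in> trap A M (2 * n) \<longrightarrow> y \<in> trap A M n"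
  using AE_S_\<tau>_orbit
proof eventually_elim
  case (elim y)
  show ?case
  proof (intro allI impI)
    fix n
    assume "(\<tau> ^^ n) y \<in> trap A M (2 * n)"
    then obtain i where "(\<tau> ^^ n) y \<in> past_avoiding (A i) ((n + M i) + n)"
      by (auto simp: trap_def mult_2 add_ac)
    then show "y \<in> trap A M n"
      using past_avoiding_of_funpow[OF elim] by (auto simp: trap_def)
  qed
qed

lemma exists_traps:
  fixes \<epsilon> :: "nat \<Rightarrow> real"
  assumes pos: "\<And>n. n \<ge> 1 \<Longrightarrow> 0 < \<epsilon> n" and lim: "\<epsilon> \<longlonglongrightarrow> 0"
  shows "\<exists>G. (\<forall>K. G K \<in> sets unit_int) \<and> decseq G \<and> (AE y in unit_int. \<exists>K. y \<notin> G K) \<and>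
           (\<forall>n\<ge>1. \<epsilon> n < 1/2 \<longrightarrow> \<epsilon> n < measure unit_int (G (2 * n))) \<and>
           (AE y in unit_int. \<forall>n. (\<tau> ^^ n) y \<in> G (2 * n) \<longrightarrow> y \<in> G n)"
proof -
  obtain N A M where A: "\<And>i. A i \<in> sets unit_int" "\<And>i. 0 < measure unit_int (A i)"
    and N: "\<And>i n. n \<ge> N i \<Longrightarrow> \<epsilon> n < (1/2) ^ (i + 2)"
    and escape: "\<And>i. measure unit_int (past_avoiding (A i) (Suc (M i))) < (1/2) ^ i"
    and slow: "\<And>i n. n < N i \<Longrightarrow>
      (1/2) ^ (i + 1) \<le> measure unit_int (past_avoiding (A i) (2 * n + M i))"
    using exists_dyadic_past_avoiding_family[OF lim] by blast
  have "summable (\<lambda>i. measure unit_int (past_avoiding (A i) (Suc (M i))))"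
    using escape
    by (intro summable_comparison_test'[OF summable_geometric[of "1/2"]]) (auto intro: less_imp_le)
  then have "AE y in unit_int. \<exists>K. y \<notin> trap A M K"
    by (rule AE_eventually_not_trap[OF A])
  moreover have "\<epsilon> n < measure unit_int (trap A M (2 * n))" if n: "n \<ge> 1" "\<epsilon> n < 1/2" for n
  proof -
    obtain i where i: "(1/2) ^ (i + 2) \<le> \<epsilon> n" "\<epsilon> n < (1/2) ^ (i + 1)"
      using exists_dyadic_bracket[OF pos n(2)] n(1) by blast
    then have "n < N i"
      using N[of i n] by (meson not_le not_less)
    then have "(1/2) ^ (i + 1) \<le> measure unit_int (past_avoiding (A i) (2 * n + M i))"
      by (rule slow)
    also have "\<dots> \<le> measure unit_int (trap A M (2 * n))"
      using sets_trap[OF A(1)] by (intro unit.finite_measure_mono) (auto simp: trap_def)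
    finally show ?thesis
      using i(2) by simp
  qed
  ultimately show ?thesis
    using sets_trap[OF A(1)] decseq_trap AE_trap_of_funpow by (intro exI[of _ "trap A M"]) simp
qed

end

context ergodic_inv_mpt
begin

lemma AE_finite_small_along_orbit:
  fixes G :: "nat \<Rightarrow> real set" and \<sigma> :: "real \<Rightarrow> real" and \<epsilon> :: "nat \<Rightarrow> real"
  assumes dec: "decseq G" and exhaust: "AE y in unit_int. \<exists>K. y \<notin> G K"
    and large: "\<forall>\<^sub>F n in sequentially. \<epsilon> n < measure unit_int (G (2 * n))"
    and backward: "AE y in unit_int. \<forall>n. (\<tau> ^^ n) y \<in> G (2 * n) \<longrightarrow> y \<in> G n"
    and straight: "AE y in unit_int. \<forall>K. \<sigma> y < measure unit_int (G K) \<longrightarrow> y \<in> G K"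
  shows "AE y in unit_int. finite {n. \<sigma> ((\<tau> ^^ n) y) \<le> \<epsilon> n}"
proof -
  obtain N where N: "\<And>n. n \<ge> N \<Longrightarrow> \<epsilon> n < measure unit_int (G (2 * n))"
    using large by (auto simp: eventually_sequentially)
  have "\<forall>n. AE y in unit_int. \<forall>K. \<sigma> ((\<tau> ^^ n) y) < measure unit_int (G K) \<longrightarrow> (\<tau> ^^ n) y \<in> G K"
    using AE_mpt_comp[OF mpt_funpow[OF mpt_\<tau>] straight] by blast
  then have "AE y in unit_int. \<forall>n K. \<sigma> ((\<tau> ^^ n) y) < measure unit_int (G K) \<longrightarrow> (\<tau> ^^ n) y \<in> G K"
    by (rule AE_all_countable[THEN iffD2])
  then show ?thesis
    using backward exhaust
  proof eventually_elim
    case (elim y)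
    then obtain K where K: "y \<notin> G K"
      by blast
    have "n < max N K" if "\<sigma> ((\<tau> ^^ n) y) \<le> \<epsilon> n" for n
    proof (rule ccontr)
      assume "\<not> n < max N K"
      then have "N \<le> n" "K \<le> n"
        by auto
      then have "(\<tau> ^^ n) y \<in> G (2 * n)"
        using elim(1)[rule_format, of n "2 * n"] that N[of n] by simp
      then have "y \<in> G n"
        using elim(2) by blast
      then have "y \<in> G K"
        using dec \<open>K \<le> n\<close> by (auto simp: decseq_def)
      then show False
        using K by blast
    qed
    then have "{n. \<sigma> ((\<tau> ^^ n) y) \<le> \<epsilon> n} \<subseteq> {..<max N K}"
      by blast
    then show ?case
      by (rule finite_subset) simp
  qed
qed

lemma exists_conj_with_invisible_targets:
  fixes \<epsilon> :: "nat \<Rightarrow> real"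
  assumes pos: "\<And>n. n \<ge> 1 \<Longrightarrow> 0 < \<epsilon> n" and lim: "\<epsilon> \<longlonglongrightarrow> 0"
  shows "\<exists>\<sigma> \<sigma>'. inv_mpt_with \<sigma> \<sigma>' \<and>
           (AE x in unit_int. finite {n. n \<ge> 1 \<and> ((\<lambda>x. \<sigma> (\<tau> (\<sigma>' x))) ^^ n) x \<in> {0..\<epsilon> n}})"
proof -
  obtain G where G: "\<And>K. G K \<in> sets unit_int" and dec: "decseq G"
    and exhaust: "AE y in unit_int. \<exists>K. y \<notin> G K"
    and large: "\<And>n. n \<ge> 1 \<Longrightarrow> \<epsilon> n < 1/2 \<Longrightarrow> \<epsilon> n < measure unit_int (G (2 * n))"
    and backward: "AE y in unit_int. \<forall>n. (\<tau> ^^ n) y \<in> G (2 * n) \<longrightarrow> y \<in> G n"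
    using exists_traps[OF pos lim] by blast
  obtain \<sigma> \<sigma>' where iso: "inv_mpt_with \<sigma> \<sigma>'"
    and straight: "AE y in unit_int. \<forall>K. \<sigma> y < measure unit_int (G K) \<longrightarrow> y \<in> G K"
    using exists_inv_mpt_straightening_decseq[OF G dec exhaust] by blast
  have "\<forall>\<^sub>F n in sequentially. \<epsilon> n < 1/2"
    using order_tendstoD(2)[OF lim, of "1/2"] by simp
  then have "\<forall>\<^sub>F n in sequentially. \<epsilon> n < measure unit_int (G (2 * n))"
    using eventually_ge_at_top[of 1] by eventually_elim (simp add: large)
  then have few: "AE y in unit_int. finite {n. \<sigma> ((\<tau> ^^ n) y) \<le> \<epsilon> n}"
    by (rule AE_finite_small_along_orbit[OF dec exhaust _ backward straight])
  have "mpt \<sigma>'"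
    using iso by (simp add: inv_mpt_with_def)
  from AE_mpt_comp[OF this few]
  have "AE x in unit_int. finite {n. n \<ge> 1 \<and> ((\<lambda>x. \<sigma> (\<tau> (\<sigma>' x))) ^^ n) x \<in> {0..\<epsilon> n}}"
    using AE_funpow_conj[OF iso mpt_\<tau>] by eventually_elim (auto elim: rev_finite_subset)
  with iso show ?thesis
    by blast
qed

end

theorem mainTheorem9:
  fixes \<tau> :: "real \<Rightarrow> real" and \<epsilon> :: "nat \<Rightarrow> real"
  assumes "ergodic_map \<tau>" and "inv_mpt \<tau>"
    and "\<And>n. n \<ge> 1 \<Longrightarrow> 0 < \<epsilon> n \<and> \<epsilon> n \<le> 1"
    and "\<And>n. n \<ge> 1 \<Longrightarrow> \<epsilon> (Suc n) \<le> \<epsilon> n"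
    and "\<epsilon> \<longlonglongrightarrow> 0"
  shows "\<exists>\<sigma> \<sigma>'. inv_mpt_with \<sigma> \<sigma>' \<and>
           (let \<omega> = (\<lambda>x. \<sigma> (\<tau> (\<sigma>' x))) in
              ergodic_map \<omega> \<and> inv_mpt \<omega> \<and>
              (AE x in unit_int. finite {n. n \<ge> 1 \<and> (\<omega> ^^ n) x \<in> {0..\<epsilon> n}}))"
proof -
  obtain S where S: "inv_mpt_with \<tau> S"
    using assms(2) by (auto simp: inv_mpt_def)
  interpret ergodic_inv_mpt \<tau> S
    using assms(1) S by unfold_locales
  obtain \<sigma> \<sigma>' where iso: "inv_mpt_with \<sigma> \<sigma>'"
    and invisible: "AE x in unit_int. finite {n. n \<ge> 1 \<and> ((\<lambda>x. \<sigma> (\<tau> (\<sigma>' x))) ^^ n) x \<in> {0..\<epsilon> n}}"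
    using exists_conj_with_invisible_targets[of \<epsilon>] assms(3,5) by blast
  have "ergodic_map (\<lambda>x. \<sigma> (\<tau> (\<sigma>' x)))"
    by (rule ergodic_map_conj[OF assms(1) iso])
  moreover have "inv_mpt (\<lambda>x. \<sigma> (\<tau> (\<sigma>' x)))"
    using inv_mpt_with_conj[OF iso S] by (auto simp: inv_mpt_def)
  ultimately show ?thesis
    unfolding Let_def using iso invisible by blast
qed
end
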